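(* For every multi-type resource allocation problem and every profile $R$ of strict linear orders over bundles, $\mathrm{MPS}(R)$ is sd-envy-free.
   Context: Setting: $N=\{1,\dots,n\}$ agents; $M=D_1\cup\dots\cup D_p$ items with pairwise disjoint types, $|D_i|=n$, unit supply; bundles $\mathcal D=D_1\times\dots\times D_p$; strict linear orders $\succ_j$ on $\mathcal D$. An assignment is an $n\times|\mathcal D|$ matrix $(p_{j,x})$ with entries in $[0,1]$, rows summing to $1$, and $\sum_j\sum_{x\ni o}p_{j,x}=1$ for each item $o$; row $P_j$ is agent $j$'s allocation. $U(\succ,x)=\{y:y\succ x\}\cup\{x\}$; $p$ weakly stochastically dominates $q$ w.r.t. $\succ$ if $\sum_{y\in U(\succ,x)}p_y\ge\sum_{y\in U(\succ,x)}q_y$ for all $x$. $P$ is sd-envy-free if for all agents $j,k$, $P_j$ weakly stochastically dominates $P_k$ w.r.t. $\succ_j$. MPS: items start with supply $1$; a bundle is available if all its items have positive remaining supply. Continuously in time each agent eats her most preferred available bundle at rate $1$ (each item in the bundle is consumed at rate $1$ and $p_{j,x}$ grows at rate $1$); exhausted items make all bundles containing them unavailable; the process runs until all items are exhausted; the accumulated matrix is $\mathrm{MPS}(R)$. *)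

theory Defs
  imports Complex_Main "HOL-Library.FuncSet"
begin

(* Agents are 0..n-1.  Item types are D 0, ..., D (p-1) (sets of items of type 'o).
   A bundle is an element of D_0 x ... x D_{p-1}, represented as an extensional
   function x with x i \<in> D i for i < p.  A preference of agent j is a relation
   R j where (y, x) \<in> R j means y \<succ>_j x.
   An allocation/assignment is P :: nat \<Rightarrow> (nat \<Rightarrow> 'o) \<Rightarrow> real, P j x = p_{j,x}. *)

definition bundles :: "nat \<Rightarrow> (nat \<Rightarrow> 'o set) \<Rightarrow> (nat \<Rightarrow> 'o) set" where
  "bundles p D = PiE {..<p} D"

definition items :: "nat \<Rightarrow> (nat \<Rightarrow> 'o set) \<Rightarrow> 'o set" where
  "items p D = (\<Union>i<p. D i)"

definition in_bundle :: "nat \<Rightarrow> 'o \<Rightarrow> (nat \<Rightarrow> 'o) \<Rightarrow> bool" where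
  "in_bundle p it x \<longleftrightarrow> (\<exists>i<p. x i = it)"

definition upper :: "(nat \<Rightarrow> 'o) set \<Rightarrow> ((nat \<Rightarrow> 'o) \<times> (nat \<Rightarrow> 'o)) set \<Rightarrow> (nat \<Rightarrow> 'o) \<Rightarrow> (nat \<Rightarrow> 'o) set" where
  "upper B r x = {y \<in> B. (y, x) \<in> r} \<union> {x}"

definition sd_weak_dom :: "(nat \<Rightarrow> 'o) set \<Rightarrow> ((nat \<Rightarrow> 'o) \<times> (nat \<Rightarrow> 'o)) set
    \<Rightarrow> ((nat \<Rightarrow> 'o) \<Rightarrow> real) \<Rightarrow> ((nat \<Rightarrow> 'o) \<Rightarrow> real) \<Rightarrow> bool" where
  "sd_weak_dom B r P Q \<longleftrightarrow> (\<forall>x\<in>B. (\<Sum>y\<in>upper B r x. P y) \<ge> (\<Sum>y\<in>upper B r x. Q y))"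

definition sd_envy_free :: "nat \<Rightarrow> nat \<Rightarrow> (nat \<Rightarrow> 'o set)
    \<Rightarrow> (nat \<Rightarrow> ((nat \<Rightarrow> 'o) \<times> (nat \<Rightarrow> 'o)) set) \<Rightarrow> (nat \<Rightarrow> (nat \<Rightarrow> 'o) \<Rightarrow> real) \<Rightarrow> bool" where
  "sd_envy_free n p D R P \<longleftrightarrow>
     (\<forall>j<n. \<forall>k<n. sd_weak_dom (bundles p D) (R j) (P j) (P k))"

(* ---------- Multi-type probabilistic serial (MPS) eating process ----------
   The continuous process is piecewise constant: between two consecutive
   exhaustion events every agent eats a fixed bundle. *)

definition available :: "nat \<Rightarrow> (nat \<Rightarrow> 'o set) \<Rightarrow> ('o \<Rightarrow> real) \<Rightarrow> (nat \<Rightarrow> 'o) set" where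
  "available p D s = {x \<in> bundles p D. \<forall>i<p. s (x i) > 0}"

definition top_of :: "((nat \<Rightarrow> 'o) \<times> (nat \<Rightarrow> 'o)) set \<Rightarrow> (nat \<Rightarrow> 'o) set \<Rightarrow> (nat \<Rightarrow> 'o)" where
  "top_of r A = (THE x. x \<in> A \<and> (\<forall>y\<in>A. y \<noteq> x \<longrightarrow> (x, y) \<in> r))"

definition eat_rate :: "nat \<Rightarrow> nat \<Rightarrow> (nat \<Rightarrow> 'o set)
    \<Rightarrow> (nat \<Rightarrow> ((nat \<Rightarrow> 'o) \<times> (nat \<Rightarrow> 'o)) set) \<Rightarrow> ('o \<Rightarrow> real) \<Rightarrow> 'o \<Rightarrow> real" where
  "eat_rate n p D R s it =
     real (card {j. j < n \<and> in_bundle p it (top_of (R j) (available p D s))})"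

(* one phase: run until the first item becomes exhausted *)
definition mps_step :: "nat \<Rightarrow> nat \<Rightarrow> (nat \<Rightarrow> 'o set)
    \<Rightarrow> (nat \<Rightarrow> ((nat \<Rightarrow> 'o) \<times> (nat \<Rightarrow> 'o)) set)
    \<Rightarrow> ('o \<Rightarrow> real) \<times> (nat \<Rightarrow> (nat \<Rightarrow> 'o) \<Rightarrow> real)
    \<Rightarrow> ('o \<Rightarrow> real) \<times> (nat \<Rightarrow> (nat \<Rightarrow> 'o) \<Rightarrow> real)" where
  "mps_step n p D R st =
     (let s = fst st; P = snd st;
          A = available p D s;
          c = eat_rate n p D R s;
          E = {it \<in> items p D. c it > 0}
      in if A = {} \<or> E = {} then st
         else (let \<delta> = Min ((\<lambda>it. s it / c it) ` E)
               in (\<lambda>it. s it - \<delta> * c it,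
                   \<lambda>j x. P j x + (if j < n \<and> x = top_of (R j) A then \<delta> else 0))))"

(* every phase exhausts at least one item, so |M| phases suffice *)
definition MPS :: "nat \<Rightarrow> nat \<Rightarrow> (nat \<Rightarrow> 'o set)
    \<Rightarrow> (nat \<Rightarrow> ((nat \<Rightarrow> 'o) \<times> (nat \<Rightarrow> 'o)) set) \<Rightarrow> (nat \<Rightarrow> (nat \<Rightarrow> 'o) \<Rightarrow> real)" where
  "MPS n p D R = snd ((mps_step n p D R ^^ card (items p D)) (\<lambda>_. 1, \<lambda>_ _. 0))"

end

theory Submission
  imports Defs
begin

text \<open>In every phase of the eating process all agents face the same set of available bundles
and each eats her favourite one at the same rate. If agent k is eating a bundle that agent j
ranks at least as high as x, then so is agent j, whose bundle is at least as good for her as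
k's. Hence the probability mass that k accumulates on j's upper contour set of x never
outgrows j's, phase by phase.\<close>

lemma strict_linear_order_on_finite_has_greatest:
  assumes slo: "strict_linear_order_on B r" and "finite A" "A \<noteq> {}" "A \<subseteq> B"
  obtains t where "t \<in> A" "\<And>y. y \<in> A \<Longrightarrow> y \<noteq> t \<Longrightarrow> (t, y) \<in> r"
proof -
  have "trans r" "irrefl r" "total_on B r" using slo by (auto simp: strict_linear_order_on_def)
  have "trans (Restr r A)" using \<open>trans r\<close> by (intro trans_Int) (auto intro: transI)
  then have "acyclic (Restr r A)" using \<open>irrefl r\<close> by (simp add: acyclic_irrefl irrefl_def)
  then have "wf (Restr r A)" using \<open>finite A\<close> by (intro finite_acyclic_wf) auto
  then obtain t where "t \<in> A" and t_max: "\<And>y. (y, t) \<in> Restr r A \<Longrightarrow> y \<notin> A"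
    using \<open>A \<noteq> {}\<close> by (metis wfE_min ex_in_conv)
  show thesis
  proof (rule that[OF \<open>t \<in> A\<close>])
    fix y assume "y \<in> A" "y \<noteq> t"
    then show "(t, y) \<in> r"
      using t_max[of y] \<open>t \<in> A\<close> \<open>total_on B r\<close> \<open>A \<subseteq> B\<close> by (auto simp: total_on_def)
  qed
qed

lemma top_of_greatest:
  assumes slo: "strict_linear_order_on B r" and "finite A" "A \<noteq> {}" "A \<subseteq> B"
  shows "top_of r A \<in> A" and "\<And>y. y \<in> A \<Longrightarrow> y \<noteq> top_of r A \<Longrightarrow> (top_of r A, y) \<in> r"
proof -
  obtain t where t: "t \<in> A" "\<And>y. y \<in> A \<Longrightarrow> y \<noteq> t \<Longrightarrow> (t, y) \<in> r"
    using strict_linear_order_on_finite_has_greatest[OF assms] by blast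
  have "trans r" "irrefl r" using slo by (auto simp: strict_linear_order_on_def)
  have "top_of r A = t"
    unfolding top_of_def
  proof (rule the_equality)
    show "t \<in> A \<and> (\<forall>y\<in>A. y \<noteq> t \<longrightarrow> (t, y) \<in> r)" using t by blast
  next
    fix u assume u: "u \<in> A \<and> (\<forall>y\<in>A. y \<noteq> u \<longrightarrow> (u, y) \<in> r)"
    show "u = t"
    proof (rule ccontr)
      assume "u \<noteq> t"
      then have "(u, t) \<in> r" "(t, u) \<in> r" using u t by auto
      then have "(u, u) \<in> r" by (rule transD[OF \<open>trans r\<close>])
      with \<open>irrefl r\<close> show False by (simp add: irrefl_def)
    qed
  qed
  with t show "top_of r A \<in> A" and "\<And>y. y \<in> A \<Longrightarrow> y \<noteq> top_of r A \<Longrightarrow> (top_of r A, y) \<in> r"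
    by simp_all
qed

lemma upper_upward_closed:
  assumes "trans r" "y \<in> B" "(y, z) \<in> r" "z \<in> upper B r x"
  shows "y \<in> upper B r x"
  using assms unfolding upper_def by (auto intro: transD[OF \<open>trans r\<close>])

lemma finite_bundles: "\<forall>i<p. finite (D i) \<Longrightarrow> finite (bundles p D)"
  unfolding bundles_def by (intro finite_PiE) auto

lemma finite_items: "\<forall>i<p. finite (D i) \<Longrightarrow> finite (items p D)"
  unfolding items_def by auto

text \<open>The phase length is nonnegative: the item attaining the minimum lies in some agent's
favourite bundle, which is available, so its remaining supply is positive.\<close>

lemma mps_step_eats_top:
  assumes finD: "\<forall>i<p. finite (D i)"
    and slo: "\<forall>j<n. strict_linear_order_on (bundles p D) (R j)"
  obtains "mps_step n p D R st = st"
  | \<delta> where "\<delta> \<ge> 0" "available p D (fst st) \<noteq> {}"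
      "snd (mps_step n p D R st) =
         (\<lambda>j x. snd st j x + (if j < n \<and> x = top_of (R j) (available p D (fst st)) then \<delta> else 0))"
proof -
  define s where "s = fst st"
  define A where "A = available p D s"
  define c where "c = eat_rate n p D R s"
  define E where "E = {it \<in> items p D. c it > 0}"
  define \<delta> where "\<delta> = Min ((\<lambda>it. s it / c it) ` E)"
  have step: "mps_step n p D R st =
      (if A = {} \<or> E = {} then st
       else (\<lambda>it. s it - \<delta> * c it,
             \<lambda>j x. snd st j x + (if j < n \<and> x = top_of (R j) A then \<delta> else 0)))"
    unfolding mps_step_def Let_def A_def E_def c_def s_def \<delta>_def by simp
  consider "A = {} \<or> E = {}" | "A \<noteq> {}" "E \<noteq> {}" by blast
  then show thesis
  proof cases
    case 1
    with step show thesis using that(1) by simp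
  next
    case 2
    have "A \<subseteq> bundles p D" unfolding A_def available_def by auto
    then have "finite A" using finite_bundles[OF finD] by (rule finite_subset)
    have "finite E" unfolding E_def using finite_items[OF finD] by auto
    then obtain it where "it \<in> E" and \<delta>_eq: "\<delta> = s it / c it"
      unfolding \<delta>_def using \<open>E \<noteq> {}\<close> by (metis (no_types, lifting) Min_in finite_imageI image_iff image_is_empty)
    then have "c it > 0" unfolding E_def by auto
    then obtain j where "j < n" "in_bundle p it (top_of (R j) A)"
      unfolding c_def eat_rate_def A_def by (metis (no_types, lifting) Collect_empty_eq card.empty of_nat_0 less_irrefl)
    moreover have "top_of (R j) A \<in> A"
      using top_of_greatest(1) slo \<open>j < n\<close> \<open>finite A\<close> \<open>A \<noteq> {}\<close> \<open>A \<subseteq> bundles p D\<close> by blast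
    ultimately have "s it > 0" unfolding in_bundle_def A_def available_def by auto
    with \<open>c it > 0\<close> \<delta>_eq have "\<delta> \<ge> 0" by simp
    with 2 step show thesis using that(2) unfolding A_def s_def by simp
  qed
qed

lemma sum_upper_eating_top_mono:
  fixes P Q :: "(nat \<Rightarrow> 'o) \<Rightarrow> real"
  assumes "strict_linear_order_on B r" "finite B" "A \<subseteq> B" "A \<noteq> {}" "\<delta> \<ge> 0" "t \<in> A"
    and "sum Q (upper B r x) \<le> sum P (upper B r x)"
  shows "(\<Sum>y\<in>upper B r x. Q y + (if y = t then \<delta> else 0))
       \<le> (\<Sum>y\<in>upper B r x. P y + (if y = top_of r A then \<delta> else 0))"
proof -
  let ?U = "upper B r x"
  have "finite ?U" using \<open>finite B\<close> unfolding upper_def by auto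
  have "finite A" using \<open>A \<subseteq> B\<close> \<open>finite B\<close> by (rule finite_subset)
  note top = top_of_greatest[OF assms(1) \<open>finite A\<close> \<open>A \<noteq> {}\<close> \<open>A \<subseteq> B\<close>]
  have "trans r" using assms(1) by (simp add: strict_linear_order_on_def)
  have "top_of r A \<in> ?U" if "t \<in> ?U"
  proof (cases "t = top_of r A")
    case False
    with top \<open>t \<in> A\<close> have "(top_of r A, t) \<in> r" by auto
    with top(1) \<open>A \<subseteq> B\<close> \<open>t \<in> ?U\<close> show ?thesis
      by (blast intro: upper_upward_closed[OF \<open>trans r\<close>])
  qed (use that in simp)
  then show ?thesis using assms(5,7) \<open>finite ?U\<close> by (auto simp: sum.distrib)
qed

lemma mps_step_preserves_upper_dominance:
  assumes finD: "\<forall>i<p. finite (D i)"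
    and slo: "\<forall>j<n. strict_linear_order_on (bundles p D) (R j)"
    and "j < n" "k < n"
    and "sum (snd st k) (upper (bundles p D) (R j) x) \<le> sum (snd st j) (upper (bundles p D) (R j) x)"
  shows "sum (snd (mps_step n p D R st) k) (upper (bundles p D) (R j) x)
       \<le> sum (snd (mps_step n p D R st) j) (upper (bundles p D) (R j) x)"
proof (cases rule: mps_step_eats_top[OF finD slo, of st])
  case 1
  with assms(5) show ?thesis by simp
next
  case (2 \<delta>)
  let ?A = "available p D (fst st)"
  have "?A \<subseteq> bundles p D" unfolding available_def by auto
  moreover have "top_of (R k) ?A \<in> ?A"
    using top_of_greatest(1) slo \<open>k < n\<close> finite_bundles[OF finD] \<open>?A \<noteq> {}\<close> \<open>?A \<subseteq> bundles p D\<close>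
    by (meson finite_subset)
  ultimately show ?thesis
    using sum_upper_eating_top_mono[of "bundles p D" "R j" ?A \<delta> "top_of (R k) ?A"]
      2 assms slo finite_bundles[OF finD] by simp
qed

theorem proposition2:
  fixes n p :: nat and D :: "nat \<Rightarrow> 'o set"
    and R :: "nat \<Rightarrow> ((nat \<Rightarrow> 'o) \<times> (nat \<Rightarrow> 'o)) set"
  assumes "\<forall>i<p. finite (D i) \<and> card (D i) = n"
    and "\<forall>i<p. \<forall>i'<p. i \<noteq> i' \<longrightarrow> D i \<inter> D i' = {}"
    and "\<forall>j<n. strict_linear_order_on (bundles p D) (R j)"
  shows "sd_envy_free n p D R (MPS n p D R)"
  unfolding sd_envy_free_def sd_weak_dom_def
proof (intro allI impI ballI)
  fix j k x assume "j < n" "k < n"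
  have finD: "\<forall>i<p. finite (D i)" using assms(1) by auto
  let ?U = "upper (bundles p D) (R j) x"
  have "sum (snd ((mps_step n p D R ^^ m) (\<lambda>_. 1, \<lambda>_ _. 0)) k) ?U
      \<le> sum (snd ((mps_step n p D R ^^ m) (\<lambda>_. 1, \<lambda>_ _. 0)) j) ?U" for m
    by (induction m)
      (simp_all add: mps_step_preserves_upper_dominance[OF finD assms(3) \<open>j < n\<close> \<open>k < n\<close>])
  then show "sum (MPS n p D R k) ?U \<le> sum (MPS n p D R j) ?U"
    unfolding MPS_def by blast
qed

end
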